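(* Let $k\ge 1$ be an integer and let $\bm\delta=(\delta_1,\dots,\delta_k)$ be any fixed sequence of positive reals. Then \[C_k(n,\dots,n)=\begin{cases}\Omega\left(n^{\lfloor (k+1)/3\rfloor+1}\right), & \text{if } k\equiv 0,2 \pmod 3,\\ \Omega\left(n^{(k-1)/3}\,u_2(n)\right), & \text{if } k\equiv 1\pmod 3.\end{cases}\]
   Context: For a fixed $\bm\delta=(\delta_1,\dots,\delta_k)$ and sets $P_1,\dots,P_{k+1}\subseteq\mathbb{R}^2$, let $C_k(P_1,\dots,P_{k+1})$ be the number of $(k+1)$-tuples $(p_1,\dots,p_{k+1})$ with $p_i\in P_i$ for all $i$, $\|p_i-p_{i+1}\|=\delta_i$ for all $i\in[k]$, and $p_i\ne p_j$ for $i\ne j$. Let $C_k(n_1,\dots,n_{k+1})$ be the maximum of $C_k(P_1,\dots,P_{k+1})$ over all $P_1,\dots,P_{k+1}\subseteq\mathbb{R}^2$ with $|P_i|\le n_i$. $u_2(n)$ denotes the maximum number of pairs of points at distance exactly $1$ in a set of $n$ points in $\mathbb{R}^2$. Implicit constants may depend on $k$ and $\bm\delta$. *)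

theory Defs
  imports "HOL-Analysis.Analysis" "HOL-Library.Landau_Symbols"
begin

text \<open>A (k+1)-tuple of points is a function p indexed by {1..k+1}; the distances
  delta are indexed by {1..k}; the sets P are indexed by {1..k+1}.\<close>

definition path_tuples ::
  "nat \<Rightarrow> (nat \<Rightarrow> real) \<Rightarrow> (nat \<Rightarrow> (real^2) set) \<Rightarrow> (nat \<Rightarrow> real^2) set" where
  "path_tuples k \<delta> P =
     {p \<in> {1..k+1} \<rightarrow>\<^sub>E UNIV.
        (\<forall>i\<in>{1..k+1}. p i \<in> P i) \<and>
        (\<forall>i\<in>{1..k}. dist (p i) (p (i+1)) = \<delta> i) \<and>
        inj_on p {1..k+1}}"

definition Ck_sets :: "nat \<Rightarrow> (nat \<Rightarrow> real) \<Rightarrow> (nat \<Rightarrow> (real^2) set) \<Rightarrow> nat" where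
  "Ck_sets k \<delta> P = card (path_tuples k \<delta> P)"

definition Ck :: "nat \<Rightarrow> (nat \<Rightarrow> real) \<Rightarrow> nat \<Rightarrow> nat" where
  "Ck k \<delta> n = Max {Ck_sets k \<delta> P | P.
      \<forall>i\<in>{1..k+1}. finite (P i) \<and> card (P i) \<le> n}"

definition unit_pairs :: "(real^2) set \<Rightarrow> nat" where
  "unit_pairs S = card {{p, q} | p q. p \<in> S \<and> q \<in> S \<and> dist p q = 1}"

definition u2 :: "nat \<Rightarrow> nat" where
  "u2 n = Max {unit_pairs S | S. finite S \<and> card S = n}"

end

(*
  Only paths whose vertices increase
  strictly in the lexicographic order of the plane are counted, so the vertices of a
  path are automatically distinct. A family of paths all ending at one point can be
  glued to a translate of a family all starting at one point: the numbers of paths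
  multiply, while each of the k + 1 point sets still has at most n elements.

  The building blocks are a fan of n edges of length delta_i leaving a common point,
  and a bridge of three edges with fixed endpoints whose first edge turns through a
  small arc; the middle vertex of the bridge is an intersection point of two circles,
  which depends continuously on the data near a non-degenerate position. A fan
  followed by j bridges gives n^(j+1) paths with a common last point; a closing fan
  (after one extra rigid edge if k = 0 mod 3) gives the bound for k = 0, 2 mod 3.
  For k = 1 mod 3 the last three edges end in a unit-distance pair of an extremal
  n-point set: translating the grid cells of that set into a small disc, after
  pigeonholing on the offset between the cells of the two ends, keeps a constant
  fraction of the u_2(n) pairs and makes the circle-intersection construction
  available for every pair.
*)

theory Submission
  imports Defs
begin

section \<open>Lexicographically increasing paths\<close>

definition lex_less :: "real^2 \<Rightarrow> real^2 \<Rightarrow> bool" where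
  "lex_less a b \<longleftrightarrow> a$1 < b$1 \<or> (a$1 = b$1 \<and> a$2 < b$2)"

lemma lex_less_trans: "lex_less a b \<Longrightarrow> lex_less b c \<Longrightarrow> lex_less a c"
  unfolding lex_less_def by auto

lemma lex_less_irrefl: "\<not> lex_less a a"
  unfolding lex_less_def by auto

lemma lex_less_linear: "a \<noteq> b \<Longrightarrow> lex_less a b \<or> lex_less b a"
  unfolding lex_less_def vec_eq_iff forall_2 by auto

lemma lex_less_translate: "lex_less (a + v) (b + v) = lex_less a b"
  unfolding lex_less_def by auto

lemma lex_less_scaleR: "r > 0 \<Longrightarrow> lex_less (r *\<^sub>R a) (r *\<^sub>R b) = lex_less a b"
  unfolding lex_less_def by auto

lemma lex_lessI: "a$1 < b$1 \<Longrightarrow> lex_less a b"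
  unfolding lex_less_def by auto

definition lex_paths :: "nat \<Rightarrow> (nat \<Rightarrow> real) \<Rightarrow> (nat \<Rightarrow> real^2) set" where
  "lex_paths k \<delta> = {p \<in> {1..k+1} \<rightarrow>\<^sub>E UNIV.
     \<forall>i\<in>{1..k}. dist (p i) (p (i+1)) = \<delta> i \<and> lex_less (p i) (p (i+1))}"

lemma lex_pathsI:
  assumes "p \<in> {1..k+1} \<rightarrow>\<^sub>E UNIV"
    and "\<And>i. i \<in> {1..k} \<Longrightarrow> dist (p i) (p (i+1)) = \<delta> i \<and> lex_less (p i) (p (i+1))"
  shows "p \<in> lex_paths k \<delta>"
  using assms unfolding lex_paths_def by blast

lemma lex_paths_extensional: "p \<in> lex_paths k \<delta> \<Longrightarrow> p \<in> {1..k+1} \<rightarrow>\<^sub>E UNIV"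
  unfolding lex_paths_def by blast

lemma lex_paths_lex_less:
  assumes p: "p \<in> lex_paths k \<delta>" and "1 \<le> i"
  shows "i < j \<Longrightarrow> j \<le> k + 1 \<Longrightarrow> lex_less (p i) (p j)"
proof (induction j)
  case (Suc j)
  have step: "lex_less (p j) (p (Suc j))"
    using p \<open>1 \<le> i\<close> Suc.prems unfolding lex_paths_def by auto
  show ?case
  proof (cases "i = j")
    case False
    then have "lex_less (p i) (p j)"
      using Suc by simp
    then show ?thesis
      using step by (rule lex_less_trans)
  qed (use step in simp)
qed simp

lemma lex_paths_inj_on:
  assumes "p \<in> lex_paths k \<delta>"
  shows "inj_on p {1..k+1}"
proof (rule linorder_inj_onI)
  fix i j assume "i < j" "i \<in> {1..k+1}" "j \<in> {1..k+1}"
  then have "lex_less (p i) (p j)"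
    using lex_paths_lex_less[OF assms] by simp
  then show "p i \<noteq> p j"
    using lex_less_irrefl by metis
qed auto

lemma Ck_sets_le_power:
  assumes "\<forall>i\<in>{1..k+1}. finite (P i) \<and> card (P i) \<le> n"
  shows "Ck_sets k \<delta> P \<le> n ^ (k+1)"
proof -
  have "path_tuples k \<delta> P \<subseteq> Pi\<^sub>E {1..k+1} P"
    unfolding path_tuples_def by auto
  then have "Ck_sets k \<delta> P \<le> card (Pi\<^sub>E {1..k+1} P)"
    unfolding Ck_sets_def using assms by (intro card_mono finite_PiE) auto
  also have "\<dots> = (\<Prod>i\<in>{1..k+1}. card (P i))"
    by (simp add: card_PiE)
  also have "\<dots> \<le> n ^ (k+1)"
    using prod_mono[of "{1..k+1}" "\<lambda>i. card (P i)" "\<lambda>_. n"] assms by simp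
  finally show ?thesis .
qed

lemma Ck_sets_le_Ck:
  assumes "\<forall>i\<in>{1..k+1}. finite (P i) \<and> card (P i) \<le> n"
  shows "Ck_sets k \<delta> P \<le> Ck k \<delta> n"
  unfolding Ck_def
proof (rule Max_ge)
  show "finite {Ck_sets k \<delta> P | P. \<forall>i\<in>{1..k+1}. finite (P i) \<and> card (P i) \<le> n}"
    by (rule finite_subset[of _ "{..n^(k+1)}"]) (use Ck_sets_le_power in fastforce, simp)
qed (use assms in blast)

lemma card_lex_paths_le_Ck:
  assumes "F \<subseteq> lex_paths k \<delta>" "finite F" "\<forall>i\<in>{1..k+1}. card ((\<lambda>p. p i) ` F) \<le> n"
  shows "card F \<le> Ck k \<delta> n"
proof -
  define P where "P i = (\<lambda>p. p i) ` F" for i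
  have P: "\<forall>i\<in>{1..k+1}. finite (P i) \<and> card (P i) \<le> n"
    using assms unfolding P_def by auto
  have "p \<in> path_tuples k \<delta> P" if "p \<in> F" for p
    using that assms(1) lex_paths_inj_on[of p k \<delta>]
    unfolding path_tuples_def P_def lex_paths_def by blast
  moreover have "finite (path_tuples k \<delta> P)"
    by (rule finite_subset[of _ "Pi\<^sub>E {1..k+1} P"])
       (use P in \<open>auto simp: path_tuples_def intro!: finite_PiE\<close>)
  ultimately have "card F \<le> Ck_sets k \<delta> P"
    unfolding Ck_sets_def by (meson card_mono subsetI)
  also have "\<dots> \<le> Ck k \<delta> n"
    using P by (rule Ck_sets_le_Ck)
  finally show ?thesis .
qed

section \<open>Gluing families of paths\<close>

(* The flags L and R ask for a common first, resp. last, point of all paths of the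
   family: the junction needed by many_paths_glue. *)
definition many_paths :: "nat \<Rightarrow> (nat \<Rightarrow> real) \<Rightarrow> nat \<Rightarrow> nat \<Rightarrow> bool \<Rightarrow> bool \<Rightarrow> bool" where
  "many_paths k \<delta> n N L R \<longleftrightarrow> (\<exists>F \<subseteq> lex_paths k \<delta>. finite F \<and> N \<le> card F \<and>
     (\<forall>i\<in>{1..k+1}. card ((\<lambda>p. p i) ` F) \<le> n) \<and>
     (L \<longrightarrow> (\<exists>a. \<forall>p\<in>F. p 1 = a)) \<and> (R \<longrightarrow> (\<exists>a. \<forall>p\<in>F. p (k+1) = a)))"

lemma many_paths_le_Ck: "many_paths k \<delta> n N L R \<Longrightarrow> N \<le> Ck k \<delta> n"
  unfolding many_paths_def using card_lex_paths_le_Ck le_trans by blast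

definition path_join :: "nat \<Rightarrow> nat \<Rightarrow> real^2 \<Rightarrow> (nat \<Rightarrow> real^2) \<Rightarrow> (nat \<Rightarrow> real^2) \<Rightarrow> nat \<Rightarrow> real^2"
  where "path_join k l v p q = (\<lambda>i\<in>{1..k+l+1}. if i \<le> k then p i else q (i - k) + v)"

lemma path_join_lex_paths:
  assumes p: "p \<in> lex_paths k \<delta>" and q: "q \<in> lex_paths l (\<lambda>i. \<delta> (k + i))"
    and pq: "p (k+1) = q 1 + v"
  shows "path_join k l v p q \<in> lex_paths (k+l) \<delta>"
proof (rule lex_pathsI)
  show "path_join k l v p q \<in> {1..k+l+1} \<rightarrow>\<^sub>E UNIV"
    unfolding path_join_def by simp
  fix i assume i: "i \<in> {1..k+l}"
  consider "i < k" | "i = k" | "k < i" by linarith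
  then show "dist (path_join k l v p q i) (path_join k l v p q (i+1)) = \<delta> i \<and>
      lex_less (path_join k l v p q i) (path_join k l v p q (i+1))"
  proof cases
    case 1
    then show ?thesis using i p by (auto simp: path_join_def lex_paths_def)
  next
    case 2
    have "dist (p k) (p (k+1)) = \<delta> k \<and> lex_less (p k) (p (k+1))"
      using p i 2 by (auto simp: lex_paths_def)
    then show ?thesis using 2 i pq by (auto simp: path_join_def)
  next
    case 3
    then have "i - k \<in> {1..l}" "i + 1 - k = i - k + 1" using i by auto
    then show ?thesis using i q 3 by (auto simp: path_join_def lex_paths_def lex_less_translate)
  qed
qed

lemma path_join_inj:
  assumes "p \<in> {1..k+1} \<rightarrow>\<^sub>E UNIV" "p' \<in> {1..k+1} \<rightarrow>\<^sub>E UNIV"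
    "q \<in> {1..l+1} \<rightarrow>\<^sub>E UNIV" "q' \<in> {1..l+1} \<rightarrow>\<^sub>E UNIV"
    "p (k+1) = q 1 + v" "p' (k+1) = q' 1 + v" and eq: "path_join k l v p q = path_join k l v p' q'"
  shows "p = p' \<and> q = q'"
proof
  have q: "q i = q' i" if "i \<in> {1..l+1}" for i
    using fun_cong[OF eq, of "k + i"] that by (auto simp: path_join_def)
  then show "q = q'" using assms(3,4) by (rule PiE_ext[rotated 2])
  show "p = p'"
  proof (rule PiE_ext[OF assms(1,2)])
    fix i assume "i \<in> {1..k+1}"
    then consider "i \<le> k" | "i = k + 1" by fastforce
    then show "p i = p' i"
      by cases (use fun_cong[OF eq, of i] \<open>i \<in> {1..k+1}\<close> q[of 1] assms(5,6) in
          \<open>auto simp: path_join_def\<close>)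
  qed
qed

lemma path_join_first: "p (k+1) = q 1 + v \<Longrightarrow> path_join k l v p q 1 = p 1"
  by (cases "k = 0") (auto simp: path_join_def)

lemma path_join_last: "path_join k l v p q (k + l + 1) = q (l + 1) + v"
  by (simp add: path_join_def)

lemma card_image_comp_le: "finite A \<Longrightarrow> card ((\<lambda>x. f (g x)) ` A) \<le> card (g ` A)"
  using card_image_le[of "g ` A" f] by (simp add: image_image)

lemma inj_on_path_join:
  assumes "F \<subseteq> lex_paths k \<delta>" "G \<subseteq> lex_paths l \<delta>'"
    and junction: "\<And>p q. p \<in> F \<Longrightarrow> q \<in> G \<Longrightarrow> p (k+1) = q 1 + v"
  shows "inj_on (\<lambda>(p, q). path_join k l v p q) (F \<times> G)"
proof (rule inj_onI, clarify)
  fix p q p' q' assume pq: "p \<in> F" "q \<in> G" "p' \<in> F" "q' \<in> G"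
    "path_join k l v p q = path_join k l v p' q'"
  show "p = p' \<and> q = q'"
  proof (rule path_join_inj)
    show "p \<in> {1..k+1} \<rightarrow>\<^sub>E UNIV" "p' \<in> {1..k+1} \<rightarrow>\<^sub>E UNIV"
      using pq assms(1) lex_paths_extensional by blast+
    show "q \<in> {1..l+1} \<rightarrow>\<^sub>E UNIV" "q' \<in> {1..l+1} \<rightarrow>\<^sub>E UNIV"
      using pq assms(2) lex_paths_extensional by blast+
    show "p (k+1) = q 1 + v" "p' (k+1) = q' 1 + v"
      using pq junction by blast+
  qed (use pq in simp)
qed

lemma card_layer_path_join:
  assumes "finite F" "finite G" "\<forall>i\<in>{1..k+1}. card ((\<lambda>p. p i) ` F) \<le> n"
    "\<forall>i\<in>{1..l+1}. card ((\<lambda>q. q i) ` G) \<le> n" and i: "i \<in> {1..k+l+1}"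
  shows "card ((\<lambda>r. r i) ` (\<lambda>(p, q). path_join k l v p q) ` (F \<times> G)) \<le> n"
proof (cases "i \<le> k")
  case True
  then have "(\<lambda>r. r i) ` (\<lambda>(p, q). path_join k l v p q) ` (F \<times> G) \<subseteq> (\<lambda>p. p i) ` F"
    using i by (auto simp: path_join_def)
  then show ?thesis
    using assms(1,3) True i by (meson atLeastAtMost_iff card_mono finite_imageI le_trans trans_le_add1)
next
  case False
  then have "i - k \<in> {1..l+1}"
    using i by auto
  then have "card ((\<lambda>q. q (i - k)) ` G) \<le> n"
    using assms(4) by blast
  moreover have "(\<lambda>r. r i) ` (\<lambda>(p, q). path_join k l v p q) ` (F \<times> G) \<subseteq> (\<lambda>q. q (i - k) + v) ` G"
    using i False by (auto simp: path_join_def)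
  ultimately show ?thesis
    using assms(2) card_image_comp_le[OF assms(2), of "\<lambda>a. a + v" "\<lambda>q. q (i - k)"]
    by (meson card_mono finite_imageI le_trans)
qed

lemma many_paths_glue:
  assumes "many_paths k \<delta> n N L True" and "many_paths l (\<lambda>i. \<delta> (k + i)) n M True R"
  shows "many_paths (k + l) \<delta> n (N * M) L R"
proof -
  obtain F x where F: "F \<subseteq> lex_paths k \<delta>" "finite F" "N \<le> card F"
      "\<forall>i\<in>{1..k+1}. card ((\<lambda>p. p i) ` F) \<le> n" "L \<longrightarrow> (\<exists>a. \<forall>p\<in>F. p 1 = a)"
    and Fx: "\<forall>p\<in>F. p (k+1) = x"
    using assms(1) unfolding many_paths_def by auto
  obtain G y where G: "G \<subseteq> lex_paths l (\<lambda>i. \<delta> (k + i))" "finite G" "M \<le> card G"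
      "\<forall>i\<in>{1..l+1}. card ((\<lambda>q. q i) ` G) \<le> n" "R \<longrightarrow> (\<exists>a. \<forall>q\<in>G. q (l+1) = a)"
    and Gy: "\<forall>q\<in>G. q 1 = y"
    using assms(2) unfolding many_paths_def by auto
  define J where "J = (\<lambda>(p, q). path_join k l (x - y) p q)"
  have junction: "p (k+1) = q 1 + (x - y)" if "p \<in> F" "q \<in> G" for p q
    using that Fx Gy by simp
  have "inj_on J (F \<times> G)"
    unfolding J_def using F(1) G(1) junction by (rule inj_on_path_join)
  then have "N * M \<le> card (J ` (F \<times> G))"
    using F(3) G(3) by (simp add: card_image card_cartesian_product mult_le_mono)
  moreover have "J ` (F \<times> G) \<subseteq> lex_paths (k + l) \<delta>"
    using F(1) G(1) junction by (auto simp: J_def intro!: path_join_lex_paths)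
  moreover have "L \<longrightarrow> (\<exists>a. \<forall>r\<in>J ` (F \<times> G). r 1 = a)"
  proof
    assume L
    then obtain a where "\<forall>p\<in>F. p 1 = a"
      using F(5) by blast
    then have "\<forall>r\<in>J ` (F \<times> G). r 1 = a"
      using junction path_join_first by (auto simp: J_def)
    then show "\<exists>a. \<forall>r\<in>J ` (F \<times> G). r 1 = a" ..
  qed
  moreover have "R \<longrightarrow> (\<exists>a. \<forall>r\<in>J ` (F \<times> G). r (k + l + 1) = a)"
  proof
    assume R
    then obtain a where "\<forall>q\<in>G. q (l + 1) = a"
      using G(5) by blast
    then have "\<forall>r\<in>J ` (F \<times> G). r (k + l + 1) = a + (x - y)"
      using path_join_last by (auto simp: J_def)
    then show "\<exists>a. \<forall>r\<in>J ` (F \<times> G). r (k + l + 1) = a" ..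
  qed
  moreover have "finite (J ` (F \<times> G))"
    using F(2) G(2) by simp
  ultimately show ?thesis
    unfolding many_paths_def
    using card_layer_path_join[OF F(2) G(2) F(4) G(4), of _ "x - y", folded J_def]
    by (intro exI[of _ "J ` (F \<times> G)"]) blast
qed

definition path_of_list :: "(real^2) list \<Rightarrow> nat \<Rightarrow> real^2" where
  "path_of_list xs = (\<lambda>i\<in>{1..length xs}. xs ! (i - 1))"

lemma path_of_list_nth: "i < length xs \<Longrightarrow> path_of_list xs (Suc i) = xs ! i"
  by (simp add: path_of_list_def)

lemma path_of_list_inj: "path_of_list xs = path_of_list ys \<Longrightarrow> length xs = length ys \<Longrightarrow> xs = ys"
  by (metis nth_equalityI path_of_list_nth)

lemma path_of_list_lex_paths:
  assumes "length xs = k + 1"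
    and "\<And>i. i < k \<Longrightarrow> dist (xs ! i) (xs ! Suc i) = \<delta> (Suc i) \<and> lex_less (xs ! i) (xs ! Suc i)"
  shows "path_of_list xs \<in> lex_paths k \<delta>"
proof (rule lex_pathsI)
  show "path_of_list xs \<in> {1..k+1} \<rightarrow>\<^sub>E UNIV"
    using assms(1) by (simp add: path_of_list_def)
  fix i assume "i \<in> {1..k}"
  then obtain j where "i = Suc j" "j < k" by (cases i) auto
  then show "dist (path_of_list xs i) (path_of_list xs (i+1)) = \<delta> i \<and>
      lex_less (path_of_list xs i) (path_of_list xs (i+1))"
    using assms by (simp add: path_of_list_nth)
qed

lemma path_of_list_lex_paths_1:
  "dist a b = \<delta> 1 \<Longrightarrow> lex_less a b \<Longrightarrow> path_of_list [a, b] \<in> lex_paths 1 \<delta>"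
  by (rule path_of_list_lex_paths) auto

lemma path_of_list_lex_paths_3:
  assumes "dist a b = \<delta> 1" "dist b c = \<delta> 2" "dist c d = \<delta> 3"
    and "lex_less a b" "lex_less b c" "lex_less c d"
  shows "path_of_list [a, b, c, d] \<in> lex_paths 3 \<delta>"
proof (rule path_of_list_lex_paths)
  fix i :: nat assume "i < 3"
  then consider "i = 0" | "i = 1" | "i = 2" by linarith
  then show "dist ([a, b, c, d] ! i) ([a, b, c, d] ! Suc i) = \<delta> (Suc i) \<and>
      lex_less ([a, b, c, d] ! i) ([a, b, c, d] ! Suc i)"
    by cases (use assms in \<open>simp_all add: numeral_2_eq_2 numeral_3_eq_3\<close>)
qed simp

lemma path_of_list_layer:
  assumes "\<forall>t\<in>T. length (xs t) = k + 1" "j \<le> k"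
  shows "(\<lambda>p. p (Suc j)) ` path_of_list ` xs ` T = (\<lambda>t. xs t ! j) ` T"
proof -
  have "(\<lambda>p. p (Suc j)) ` path_of_list ` xs ` T = (\<lambda>t. path_of_list (xs t) (Suc j)) ` T"
    by (simp add: image_image)
  also have "\<dots> = (\<lambda>t. xs t ! j) ` T"
    using assms by (intro image_cong) (auto simp: path_of_list_nth)
  finally show ?thesis .
qed

lemma many_paths_of_lists:
  assumes "finite T" "inj_on xs T"
    and xs: "\<And>t. t \<in> T \<Longrightarrow> length (xs t) = k + 1 \<and> path_of_list (xs t) \<in> lex_paths k \<delta>"
    and "\<And>j. j \<le> k \<Longrightarrow> card ((\<lambda>t. xs t ! j) ` T) \<le> n"
    and "L \<longrightarrow> (\<exists>a. \<forall>t\<in>T. xs t ! 0 = a)" "R \<longrightarrow> (\<exists>a. \<forall>t\<in>T. xs t ! k = a)"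
  shows "many_paths k \<delta> n (card T) L R"
proof -
  define F where "F = path_of_list ` xs ` T"
  have "\<forall>t\<in>T. length (xs t) = k + 1"
    using xs by blast
  note layer = path_of_list_layer[OF this, folded F_def]
  have "inj_on path_of_list (xs ` T)"
  proof (rule inj_onI, clarify)
    fix s t assume "s \<in> T" "t \<in> T" "path_of_list (xs s) = path_of_list (xs t)"
    then show "xs s = xs t" using xs path_of_list_inj by metis
  qed
  then have "card F = card T"
    unfolding F_def using assms(2) by (simp add: card_image)
  moreover have "card ((\<lambda>p. p i) ` F) \<le> n" if i: "i \<in> {1..k+1}" for i
  proof -
    obtain j where "i = Suc j" "j \<le> k" using i by (cases i) auto
    then show ?thesis using layer assms(4) by simp
  qed
  moreover have "(\<forall>p\<in>F. p (Suc j) = a) \<longleftrightarrow> (\<forall>t\<in>T. xs t ! j = a)" if "j \<le> k" for j a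
  proof -
    have "(\<forall>p\<in>F. p (Suc j) = a) \<longleftrightarrow> (\<lambda>p. p (Suc j)) ` F \<subseteq> {a}"
      by auto
    then show ?thesis
      unfolding layer[OF that] by auto
  qed
  then have "L \<longrightarrow> (\<exists>a. \<forall>p\<in>F. p 1 = a)" "R \<longrightarrow> (\<exists>a. \<forall>p\<in>F. p (k+1) = a)"
    using assms(5,6) by simp_all
  ultimately show ?thesis
    unfolding many_paths_def using assms(1) xs by (intro exI[of _ F]) (auto simp: F_def)
qed

section \<open>Fans and bridges\<close>

definition pt :: "real \<Rightarrow> real \<Rightarrow> real^2" where
  "pt x y = vector [x, y]"

lemma pt_nth [simp]: "pt x y $ 1 = x" "pt x y $ 2 = y"
  by (simp_all add: pt_def)

lemma norm_vec2: "norm (v :: real^2) = sqrt ((v$1)\<^sup>2 + (v$2)\<^sup>2)"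
  by (simp add: norm_vec_def L2_set_def sum_2)

lemma tendsto_pt [tendsto_intros]:
  assumes "(f \<longlongrightarrow> a) F" "(g \<longlongrightarrow> b) F"
  shows "((\<lambda>z. pt (f z) (g z)) \<longlongrightarrow> pt a b) F"
proof (rule vec_tendstoI)
  fix i :: 2
  show "((\<lambda>z. pt (f z) (g z) $ i) \<longlongrightarrow> pt a b $ i) F"
    using exhaust_2[of i] assms by auto
qed

definition polar :: "real \<Rightarrow> real \<Rightarrow> real^2" where
  "polar r \<theta> = pt (r * cos \<theta>) (r * sin \<theta>)"

lemma norm_polar:
  assumes "r \<ge> 0"
  shows "norm (polar r \<theta>) = r"
proof -
  have "(r * cos \<theta>)\<^sup>2 + (r * sin \<theta>)\<^sup>2 = r\<^sup>2 * ((cos \<theta>)\<^sup>2 + (sin \<theta>)\<^sup>2)"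
    by (simp only: power_mult_distrib distrib_left)
  also have "\<dots> = r\<^sup>2"
    by simp
  finally show ?thesis
    using assms by (simp add: polar_def norm_vec2)
qed

lemma polar_inj:
  assumes "r > 0" "\<theta> \<in> {0..pi}" "\<phi> \<in> {0..pi}" "polar r \<theta> = polar r \<phi>"
  shows "\<theta> = \<phi>"
proof -
  have "r * cos \<theta> = r * cos \<phi>"
    using arg_cong[OF assms(4), of "\<lambda>v. v $ 1"] by (simp add: polar_def)
  then show ?thesis
    using assms(1-3) cos_inj_pi by auto
qed

lemma lex_less_polar:
  assumes "r > 0" "\<bar>\<theta>\<bar> < pi/2"
  shows "lex_less 0 (polar r \<theta>)"
proof (rule lex_lessI)
  have "cos \<theta> > 0"
    using assms(2) by (intro cos_gt_zero_pi) (simp_all add: abs_less_iff)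
  then show "0 $ 1 < polar r \<theta> $ 1"
    using assms(1) by (simp add: polar_def)
qed

lemma arc_points:
  assumes "r > 0" "\<rho> > 0"
  obtains A where "finite A" "card A = n"
    and "\<And>a. a \<in> A \<Longrightarrow> norm a = r \<and> lex_less 0 a \<and> dist a (pt r 0) < \<rho>"
proof -
  have "(polar r \<longlongrightarrow> polar r 0) (at 0)"
    unfolding polar_def by (intro tendsto_intros)
  then obtain \<eta> where "\<eta> > 0" and \<eta>: "\<And>\<theta>. \<theta> \<noteq> 0 \<Longrightarrow> dist \<theta> 0 < \<eta> \<Longrightarrow> dist (polar r \<theta>) (pt r 0) < \<rho>"
    using assms(2) unfolding tendsto_iff eventually_at by (auto simp: polar_def)
  have "infinite {0<..<min \<eta> (pi/2)}"
    using \<open>\<eta> > 0\<close> by (intro infinite_Ioo) simp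
  then obtain \<Theta> where \<Theta>: "finite \<Theta>" "card \<Theta> = n" "\<Theta> \<subseteq> {0<..<min \<eta> (pi/2)}"
    using infinite_arbitrarily_large by blast
  have "inj_on (polar r) \<Theta>"
    using \<Theta>(3) assms(1) by (intro inj_onI polar_inj[of r]) auto
  then have "card (polar r ` \<Theta>) = n"
    using \<Theta>(2) by (simp add: card_image)
  moreover have "norm a = r \<and> lex_less 0 a \<and> dist a (pt r 0) < \<rho>" if a: "a \<in> polar r ` \<Theta>" for a
  proof -
    obtain \<theta> where "a = polar r \<theta>" "0 < \<theta>" "\<theta> < \<eta>" "\<theta> < pi/2"
      using a \<Theta>(3) by auto
    then show ?thesis
      using assms(1) norm_polar[of r \<theta>] lex_less_polar[of r \<theta>] \<eta>[of \<theta>] by simp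
  qed
  ultimately show ?thesis
    using \<Theta>(1) by (intro that[of "polar r ` \<Theta>"]) auto
qed

lemma many_paths_fan_first:
  assumes "\<delta> 1 > 0"
  shows "many_paths 1 \<delta> n n True False"
proof -
  obtain A where A: "finite A" "card A = n"
    "\<And>a. a \<in> A \<Longrightarrow> norm a = \<delta> 1 \<and> lex_less 0 a \<and> dist a (pt (\<delta> 1) 0) < 1"
    using arc_points[OF assms zero_less_one] by blast
  have "many_paths 1 \<delta> n (card A) True False"
  proof (rule many_paths_of_lists[where xs = "\<lambda>a. [0, a]"])
    show "length [0, a] = 1 + 1 \<and> path_of_list [0, a] \<in> lex_paths 1 \<delta>" if "a \<in> A" for a
      using A(3)[OF that] path_of_list_lex_paths_1[of 0 a \<delta>] by simp
    show "card ((\<lambda>a. [0, a] ! j) ` A) \<le> n" for j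
      using card_image_le[OF A(1)] A(2) by simp
  qed (auto simp: A(1) inj_on_def)
  then show ?thesis using A(2) by simp
qed

lemma many_paths_fan_last:
  assumes "\<delta> 1 > 0"
  shows "many_paths 1 \<delta> n n False True"
proof -
  obtain A where A: "finite A" "card A = n"
    "\<And>a. a \<in> A \<Longrightarrow> norm a = \<delta> 1 \<and> lex_less 0 a \<and> dist a (pt (\<delta> 1) 0) < 1"
    using arc_points[OF assms zero_less_one] by blast
  have "many_paths 1 \<delta> n (card A) False True"
  proof (rule many_paths_of_lists[where xs = "\<lambda>a. [- a, 0]"])
    show "length [- a, 0] = 1 + 1 \<and> path_of_list [- a, 0] \<in> lex_paths 1 \<delta>" if "a \<in> A" for a
      using A(3)[OF that] path_of_list_lex_paths_1[of "- a" 0 \<delta>]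
        lex_less_translate[of 0 "- a" a] by simp
    show "card ((\<lambda>a. [- a, 0] ! j) ` A) \<le> n" for j
      using card_image_le[OF A(1)] A(2) by simp
  qed (auto simp: A(1) inj_on_def)
  then show ?thesis using A(2) by simp
qed

lemma many_paths_segment:
  assumes "\<delta> 1 > 0" "n \<ge> 1"
  shows "many_paths 1 \<delta> n 1 True True"
proof -
  have "path_of_list [0, pt (\<delta> 1) 0] \<in> lex_paths 1 \<delta>"
    using assms(1) by (intro path_of_list_lex_paths_1 lex_lessI) (simp_all add: norm_vec2)
  then have "many_paths 1 \<delta> n (card {()}) True True"
    using assms(2) by (intro many_paths_of_lists[where xs = "\<lambda>_. [0, pt (\<delta> 1) 0]"]) auto
  then show ?thesis by simp
qed

lemma norm_vec2_sq: "(norm (v :: real^2))\<^sup>2 = (v$1)\<^sup>2 + (v$2)\<^sup>2"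
  by (simp add: norm_vec2)

definition rot90 :: "real^2 \<Rightarrow> real^2" where
  "rot90 v = pt (- v$2) (v$1)"

lemma norm_scaleR_add_rot90: "(norm (a *\<^sub>R v + b *\<^sub>R rot90 v))\<^sup>2 = (a\<^sup>2 + b\<^sup>2) * (norm v)\<^sup>2"
  unfolding norm_vec2_sq by (simp add: rot90_def power2_eq_square algebra_simps)

lemma tendsto_rot90 [tendsto_intros]: "(f \<longlongrightarrow> l) F \<Longrightarrow> ((\<lambda>z. rot90 (f z)) \<longlongrightarrow> rot90 l) F"
  unfolding rot90_def by (intro tendsto_intros)

(* elbow x r y s is the intersection point of the circles of radius r about x and of
   radius s about y that lies to the left of the line from x to y; elbow_foot x r y s
   is the signed distance from x of its projection onto that line. *)
definition elbow_foot :: "real^2 \<Rightarrow> real \<Rightarrow> real^2 \<Rightarrow> real \<Rightarrow> real" where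
  "elbow_foot x r y s = (r\<^sup>2 - s\<^sup>2 + (dist x y)\<^sup>2) / (2 * dist x y)"

definition elbow :: "real^2 \<Rightarrow> real \<Rightarrow> real^2 \<Rightarrow> real \<Rightarrow> real^2" where
  "elbow x r y s = x + (elbow_foot x r y s / dist x y) *\<^sub>R (y - x)
     + (sqrt (r\<^sup>2 - (elbow_foot x r y s)\<^sup>2) / dist x y) *\<^sub>R rot90 (y - x)"

lemma elbow_dist:
  assumes "x \<noteq> y" "(elbow_foot x r y s)\<^sup>2 \<le> r\<^sup>2" "r \<ge> 0" "s \<ge> 0"
  shows "dist x (elbow x r y s) = r" "dist (elbow x r y s) y = s"
proof -
  define D where "D = dist x y"
  define t where "t = elbow_foot x r y s"
  define h where "h = sqrt (r\<^sup>2 - t\<^sup>2)"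
  have D: "D > 0" "norm (y - x) = D"
    using assms(1) by (simp_all add: D_def dist_norm norm_minus_commute)
  have h: "h\<^sup>2 = r\<^sup>2 - t\<^sup>2"
    using assms(2) by (simp add: h_def t_def)
  have t: "2 * t * D = r\<^sup>2 - s\<^sup>2 + D\<^sup>2"
    using D(1) by (simp add: t_def elbow_foot_def D_def)
  have "elbow x r y s - x = (t/D) *\<^sub>R (y - x) + (h/D) *\<^sub>R rot90 (y - x)"
    by (simp add: elbow_def t_def h_def D_def)
  then have "(dist x (elbow x r y s))\<^sup>2 = (norm ((t/D) *\<^sub>R (y - x) + (h/D) *\<^sub>R rot90 (y - x)))\<^sup>2"
    by (metis dist_commute dist_norm)
  also have "\<dots> = r\<^sup>2"
    unfolding norm_scaleR_add_rot90 D(2) using D(1) h by (simp add: field_simps)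
  finally show "dist x (elbow x r y s) = r"
    using assms(3) by (simp add: power2_eq_imp_eq)
  have "y - elbow x r y s = (1 - t/D) *\<^sub>R (y - x) + (- h/D) *\<^sub>R rot90 (y - x)"
    by (simp add: elbow_def t_def h_def D_def scaleR_diff_left)
  then have "(dist (elbow x r y s) y)\<^sup>2
      = (norm ((1 - t/D) *\<^sub>R (y - x) + (- h/D) *\<^sub>R rot90 (y - x)))\<^sup>2"
    by (metis dist_norm norm_minus_commute)
  also have "\<dots> = (D - t)\<^sup>2 + h\<^sup>2"
    unfolding norm_scaleR_add_rot90 D(2) using D(1) by (simp add: field_simps power2_eq_square)
  also have "\<dots> = s\<^sup>2"
    using h t by (simp add: power2_eq_square algebra_simps)
  finally show "dist (elbow x r y s) y = s"
    using assms(4) by (simp add: power2_eq_imp_eq)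
qed

(* For y = x + elbow_offset r s the triangle x, elbow, y has a right angle at the
   elbow x + (3r/5, 4r/5), and both of its edges point strictly to the right, so the
   lexicographic order along x, elbow, y survives small perturbations. *)
definition elbow_offset :: "real \<Rightarrow> real \<Rightarrow> real^2" where
  "elbow_offset r s = pt (3 * r / 5 + 4 * s / 5) (4 * r / 5 - 3 * s / 5)"

lemma elbow_at_offset:
  assumes r: "r > 0" and s: "s > 0"
  shows "elbow x r (x + elbow_offset r s) s = x + pt (3 * r / 5) (4 * r / 5)"
    and "(elbow_foot x r (x + elbow_offset r s) s)\<^sup>2 < r\<^sup>2"
proof -
  define D where "D = sqrt (r\<^sup>2 + s\<^sup>2)"
  have D: "D > 0" "D\<^sup>2 = r\<^sup>2 + s\<^sup>2"
    using r by (simp_all add: D_def add_pos_nonneg)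
  have dist: "dist x (x + elbow_offset r s) = D"
    unfolding D_def dist_norm norm_vec2 elbow_offset_def
    by (simp add: power2_eq_square algebra_simps)
  have foot: "elbow_foot x r (x + elbow_offset r s) s = r\<^sup>2 / D"
    unfolding elbow_foot_def dist using D by (simp add: field_simps power2_eq_square)
  have rs: "r * r + s * s \<noteq> 0"
    using r by (simp add: add_pos_nonneg)
  then have "r\<^sup>2 - (r\<^sup>2 / D)\<^sup>2 = (r * s / D)\<^sup>2"
    using D by (simp add: field_simps power2_eq_square)
  then have height: "sqrt (r\<^sup>2 - (r\<^sup>2 / D)\<^sup>2) = r * s / D"
    using r s D(1) by simp
  define v where "v = elbow_offset r s"
  have "elbow x r (x + v) s = x + (1 / D\<^sup>2) *\<^sub>R (r\<^sup>2 *\<^sub>R v + (r * s) *\<^sub>R rot90 v)"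
    unfolding elbow_def foot dist height v_def
    using D(1) by (simp add: vec_eq_iff forall_2 field_simps power2_eq_square)
  also have "r\<^sup>2 *\<^sub>R v + (r * s) *\<^sub>R rot90 v = D\<^sup>2 *\<^sub>R pt (3 * r / 5) (4 * r / 5)"
    unfolding D(2) v_def
    by (simp add: vec_eq_iff forall_2 elbow_offset_def rot90_def algebra_simps power2_eq_square)
  finally show "elbow x r (x + elbow_offset r s) s = x + pt (3 * r / 5) (4 * r / 5)"
    using D(1) by (simp add: v_def)
  have "(r\<^sup>2 / D)\<^sup>2 = r\<^sup>2 * r\<^sup>2 / D\<^sup>2"
    by (simp add: power_divide power2_eq_square)
  also have "\<dots> < r\<^sup>2 * D\<^sup>2 / D\<^sup>2"
    using r s D by (intro divide_strict_right_mono mult_strict_left_mono) (auto simp: add_pos_pos)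
  also have "\<dots> = r\<^sup>2"
    using D(1) by simp
  finally show "(elbow_foot x r (x + elbow_offset r s) s)\<^sup>2 < r\<^sup>2"
    unfolding foot .
qed

lemma tendsto_elbow:
  assumes "(X \<longlongrightarrow> x) F" "(Y \<longlongrightarrow> y) F" "x \<noteq> y"
  shows "((\<lambda>z. elbow_foot (X z) r (Y z) s) \<longlongrightarrow> elbow_foot x r y s) F"
    and "((\<lambda>z. elbow (X z) r (Y z) s) \<longlongrightarrow> elbow x r y s) F"
  using assms unfolding elbow_def elbow_foot_def by (intro tendsto_intros; simp)+

lemma eventually_elbow_nondegenerate:
  assumes r: "r > 0" and s: "s > 0"
  shows "\<forall>\<^sub>F p in nhds (x0, x0 + elbow_offset r s).
    (elbow_foot (fst p) r (snd p) s)\<^sup>2 < r\<^sup>2 \<and> fst p \<noteq> snd p \<and>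
    fst p $ 1 < elbow (fst p) r (snd p) s $ 1 \<and> elbow (fst p) r (snd p) s $ 1 < snd p $ 1"
proof -
  define y0 where "y0 = x0 + elbow_offset r s"
  define z0 where "z0 = x0 + pt (3 * r / 5) (4 * r / 5)"
  note nominal = elbow_at_offset[OF r s, of x0, folded y0_def z0_def]
  have "y0 $ 1 - z0 $ 1 = 4 * s / 5"
    by (simp add: y0_def z0_def elbow_offset_def)
  then have order: "x0 $ 1 < z0 $ 1" "z0 $ 1 < y0 $ 1"
    using r s by (simp_all add: z0_def)
  then have "x0 \<noteq> y0" by auto
  let ?F = "nhds (x0, y0)"
  have X: "(fst \<longlongrightarrow> x0) ?F" and Y: "(snd \<longlongrightarrow> y0) ?F"
    using tendsto_fst[OF filterlim_ident, of "(x0, y0)"] tendsto_snd[OF filterlim_ident, of "(x0, y0)"]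
    by simp_all
  note lim = tendsto_elbow[OF X Y \<open>x0 \<noteq> y0\<close>, of r s]
  have "\<forall>\<^sub>F p in ?F. (elbow_foot (fst p) r (snd p) s)\<^sup>2 < r\<^sup>2"
    using order_tendstoD(2)[OF tendsto_power[OF lim(1)] nominal(2)] .
  moreover have "\<forall>\<^sub>F p in ?F. fst p \<noteq> snd p"
    using order_tendstoD(1)[OF tendsto_dist[OF X Y], of 0] \<open>x0 \<noteq> y0\<close> by simp
  moreover have "\<forall>\<^sub>F p in ?F. fst p $ 1 < elbow (fst p) r (snd p) s $ 1"
    using order_tendstoD(1)[OF tendsto_diff[OF tendsto_vec_nth[OF lim(2)] tendsto_vec_nth[OF X]], of 0 1]
      order nominal(1) by (simp add: eventually_mono)
  moreover have "\<forall>\<^sub>F p in ?F. elbow (fst p) r (snd p) s $ 1 < snd p $ 1"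
    using order_tendstoD(1)[OF tendsto_diff[OF tendsto_vec_nth[OF Y] tendsto_vec_nth[OF lim(2)]], of 0 1]
      order nominal(1) by (simp add: eventually_mono)
  ultimately show ?thesis
    unfolding y0_def by eventually_elim blast
qed

lemma elbow_near:
  assumes r: "r > 0" and s: "s > 0"
  obtains \<rho> where "\<rho> > 0"
    and "\<And>x y. dist x x0 < \<rho> \<Longrightarrow> dist y (x0 + elbow_offset r s) < \<rho> \<Longrightarrow>
      dist x (elbow x r y s) = r \<and> dist (elbow x r y s) y = s \<and>
      lex_less x (elbow x r y s) \<and> lex_less (elbow x r y s) y"
proof -
  obtain d where d: "d > 0" and near: "\<And>p. dist p (x0, x0 + elbow_offset r s) < d \<Longrightarrow>
      (elbow_foot (fst p) r (snd p) s)\<^sup>2 < r\<^sup>2 \<and> fst p \<noteq> snd p \<and>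
      fst p $ 1 < elbow (fst p) r (snd p) s $ 1 \<and> elbow (fst p) r (snd p) s $ 1 < snd p $ 1"
    using eventually_elbow_nondegenerate[OF r s, of x0] unfolding eventually_nhds_metric by blast
  show ?thesis
  proof (rule that[of "d / 2"])
    fix x y assume "dist x x0 < d / 2" "dist y (x0 + elbow_offset r s) < d / 2"
    then have "dist (x, y) (x0, x0 + elbow_offset r s) < d"
      using sqrt_sum_squares_le_sum[of "dist x x0" "dist y (x0 + elbow_offset r s)"]
      by (simp add: dist_Pair_Pair)
    from near[OF this] show "dist x (elbow x r y s) = r \<and> dist (elbow x r y s) y = s \<and>
        lex_less x (elbow x r y s) \<and> lex_less (elbow x r y s) y"
      using r s by (auto intro: elbow_dist lex_lessI less_imp_le)
  qed (use d in simp)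
qed

lemma many_paths_bridge:
  assumes \<delta>: "\<forall>i\<in>{1..3}. \<delta> i > 0"
  shows "many_paths 3 \<delta> n n True True"
proof -
  have pos: "\<delta> 1 > 0" "\<delta> 2 > 0" "\<delta> 3 > 0"
    using \<delta> by auto
  define c where "c = pt (\<delta> 1) 0 + elbow_offset (\<delta> 2) (\<delta> 3)"
  obtain \<rho> where "\<rho> > 0" and near: "\<And>x y. dist x (pt (\<delta> 1) 0) < \<rho> \<Longrightarrow> dist y c < \<rho> \<Longrightarrow>
      dist x (elbow x (\<delta> 2) y (\<delta> 3)) = \<delta> 2 \<and> dist (elbow x (\<delta> 2) y (\<delta> 3)) y = \<delta> 3 \<and>
      lex_less x (elbow x (\<delta> 2) y (\<delta> 3)) \<and> lex_less (elbow x (\<delta> 2) y (\<delta> 3)) y"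
    using elbow_near[OF pos(2,3)] unfolding c_def by blast
  obtain A where A: "finite A" "card A = n"
    "\<And>a. a \<in> A \<Longrightarrow> norm a = \<delta> 1 \<and> lex_less 0 a \<and> dist a (pt (\<delta> 1) 0) < \<rho>"
    using arc_points[OF pos(1) \<open>\<rho> > 0\<close>] by blast
  define xs where "xs a = [0, a, elbow a (\<delta> 2) c (\<delta> 3), c]" for a
  have "many_paths 3 \<delta> n (card A) True True"
  proof (rule many_paths_of_lists)
    show "length (xs a) = 3 + 1 \<and> path_of_list (xs a) \<in> lex_paths 3 \<delta>" if "a \<in> A" for a
    proof -
      have "dist a (elbow a (\<delta> 2) c (\<delta> 3)) = \<delta> 2 \<and> dist (elbow a (\<delta> 2) c (\<delta> 3)) c = \<delta> 3 \<and>
          lex_less a (elbow a (\<delta> 2) c (\<delta> 3)) \<and> lex_less (elbow a (\<delta> 2) c (\<delta> 3)) c"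
        using A(3)[OF that] \<open>\<rho> > 0\<close> by (intro near) auto
      then have "path_of_list (xs a) \<in> lex_paths 3 \<delta>"
        unfolding xs_def using A(3)[OF that] by (intro path_of_list_lex_paths_3) auto
      then show ?thesis by (simp add: xs_def)
    qed
    show "card ((\<lambda>a. xs a ! j) ` A) \<le> n" for j
      using card_image_le[OF A(1)] A(2) by simp
  qed (auto simp: A(1) xs_def inj_on_def)
  then show ?thesis using A(2) by simp
qed

section \<open>Unit distances\<close>

definition lex_unit_pairs :: "(real^2) set \<Rightarrow> ((real^2) \<times> (real^2)) set" where
  "lex_unit_pairs S = {(a, b) \<in> S \<times> S. dist a b = 1 \<and> lex_less a b}"

lemma lex_unit_pairs_subset: "lex_unit_pairs S \<subseteq> S \<times> S"
  by (auto simp: lex_unit_pairs_def)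

lemma finite_lex_unit_pairs: "finite S \<Longrightarrow> finite (lex_unit_pairs S)"
  using finite_subset[OF lex_unit_pairs_subset] by blast

lemma card_lex_unit_pairs: "card (lex_unit_pairs S) = unit_pairs S"
proof -
  have "bij_betw (\<lambda>(a, b). {a, b}) (lex_unit_pairs S) {{p, q} | p q. p \<in> S \<and> q \<in> S \<and> dist p q = 1}"
  proof (rule bij_betw_imageI)
    show "inj_on (\<lambda>(a, b). {a, b}) (lex_unit_pairs S)"
    proof (rule inj_onI, clarify)
      fix a b a' b' assume "(a, b) \<in> lex_unit_pairs S" "(a', b') \<in> lex_unit_pairs S" "{a, b} = {a', b'}"
      then show "a = a' \<and> b = b'"
        unfolding lex_unit_pairs_def doubleton_eq_iff using lex_less_trans lex_less_irrefl by blast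
    qed
    show "(\<lambda>(a, b). {a, b}) ` lex_unit_pairs S = {{p, q} | p q. p \<in> S \<and> q \<in> S \<and> dist p q = 1}"
    proof safe
      fix p q assume pq: "p \<in> S" "q \<in> S" "dist p q = 1"
      then have "p \<noteq> q" by auto
      then consider "lex_less p q" | "lex_less q p" using lex_less_linear by blast
      then show "{p, q} \<in> (\<lambda>(a, b). {a, b}) ` lex_unit_pairs S"
      proof cases
        case 1
        then have "(p, q) \<in> lex_unit_pairs S" using pq by (simp add: lex_unit_pairs_def)
        then show ?thesis by force
      next
        case 2
        then have "(q, p) \<in> lex_unit_pairs S" using pq by (simp add: lex_unit_pairs_def dist_commute)
        then show ?thesis by force
      qed
    qed (auto simp: lex_unit_pairs_def)
  qed
  then show ?thesis
    unfolding unit_pairs_def by (rule bij_betw_same_card)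
qed

lemma unit_pairs_le: "finite S \<Longrightarrow> unit_pairs S \<le> 2 ^ card S"
  unfolding unit_pairs_def
  by (rule order_trans[OF card_mono[of "Pow S"]]) (auto simp: card_Pow)

lemma u2_attained: "\<exists>S. finite S \<and> card S = n \<and> unit_pairs S = u2 n"
proof -
  let ?V = "{unit_pairs S | S. finite S \<and> card S = n}"
  have "finite ?V"
    by (rule finite_subset[of _ "{..2 ^ n}"]) (use unit_pairs_le in auto)
  moreover have "inj_on (\<lambda>j. pt (real j) 0) {..<n}"
    by (rule inj_onI) (metis of_nat_eq_iff pt_nth(1))
  then have "card ((\<lambda>j. pt (real j) 0) ` {..<n}) = n"
    by (simp add: card_image)
  ultimately have "u2 n \<in> ?V"
    unfolding u2_def by (intro Max_in) blast+
  then show ?thesis by auto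
qed

lemma many_paths_scaled_unit_pairs:
  assumes "\<delta> 1 > 0" and E: "E \<subseteq> lex_unit_pairs UNIV" "finite E" "card (fst ` E) \<le> n" "card (snd ` E) \<le> n"
  shows "many_paths 1 \<delta> n (card E) False False"
proof (rule many_paths_of_lists)
  define xs where "xs t = [\<delta> 1 *\<^sub>R fst t, \<delta> 1 *\<^sub>R snd t]" for t :: "(real^2) \<times> (real^2)"
  show "inj_on xs E"
    using assms(1) by (auto intro!: inj_onI simp: xs_def prod_eq_iff)
  show "length (xs t) = 1 + 1 \<and> path_of_list (xs t) \<in> lex_paths 1 \<delta>" if tE: "t \<in> E" for t
  proof -
    obtain a b where t: "t = (a, b)" "dist a b = 1" "lex_less a b"
      using tE E(1) by (auto simp: lex_unit_pairs_def)
    have "dist (\<delta> 1 *\<^sub>R a) (\<delta> 1 *\<^sub>R b) = \<delta> 1"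
      using t assms(1) by (simp add: dist_norm flip: scaleR_diff_right)
    moreover have "lex_less (\<delta> 1 *\<^sub>R a) (\<delta> 1 *\<^sub>R b)"
      using t assms(1) by (simp add: lex_less_scaleR)
    ultimately have "path_of_list (xs t) \<in> lex_paths 1 \<delta>"
      unfolding xs_def t fst_conv snd_conv by (rule path_of_list_lex_paths_1)
    then show ?thesis
      by (simp add: xs_def)
  qed
  show "card ((\<lambda>t. xs t ! j) ` E) \<le> n" if j: "j \<le> 1" for j
  proof -
    have "j = 0 \<or> j = 1"
      using j by linarith
    then show ?thesis
      using E(3,4) card_image_comp_le[OF E(2), of "scaleR (\<delta> 1)" fst]
        card_image_comp_le[OF E(2), of "scaleR (\<delta> 1)" snd]
      by (auto simp: xs_def)
  qed
qed (simp_all add: E(2))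

lemma many_paths_unit_pairs:
  assumes "\<delta> 1 > 0"
  shows "many_paths 1 \<delta> n (u2 n) False False"
proof -
  obtain S where S: "finite S" "card S = n" "unit_pairs S = u2 n"
    using u2_attained by blast
  have "fst ` lex_unit_pairs S \<subseteq> S" "snd ` lex_unit_pairs S \<subseteq> S"
    using lex_unit_pairs_subset by fastforce+
  then have "card (fst ` lex_unit_pairs S) \<le> n" "card (snd ` lex_unit_pairs S) \<le> n"
    using card_mono[OF S(1)] S(2) by auto
  moreover have "lex_unit_pairs S \<subseteq> lex_unit_pairs UNIV"
    by (auto simp: lex_unit_pairs_def)
  ultimately have "many_paths 1 \<delta> n (card (lex_unit_pairs S)) False False"
    using many_paths_scaled_unit_pairs[of \<delta> "lex_unit_pairs S" n] assms finite_lex_unit_pairs[OF S(1)]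
    by blast
  then show ?thesis
    using S(3) by (simp add: card_lex_unit_pairs)
qed

lemma finite_scaleR_solutions:
  fixes w u :: "'v::real_vector"
  assumes "w \<noteq> 0"
  shows "finite {l. l *\<^sub>R w = u}"
proof (cases "\<exists>l. l *\<^sub>R w = u")
  case True
  then obtain l0 where "l0 *\<^sub>R w = u" by blast
  then have "{l. l *\<^sub>R w = u} = {l0}"
    using assms by auto
  then show ?thesis by simp
qed simp

(* Moving every grid cell onto a fixed cell may merge points of different cells; an
   additional shift by a small generic multiple of an injective numbering of the cells
   keeps the map injective. *)
definition collision_scalars :: "'a set \<Rightarrow> ('a \<Rightarrow> 'v::real_vector) \<Rightarrow> ('a \<Rightarrow> real) \<Rightarrow> 'v \<Rightarrow> real set"
  where "collision_scalars S f c v =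
    {l. \<exists>a\<in>S. \<exists>a'\<in>S. c a \<noteq> c a' \<and> f a + (l * c a) *\<^sub>R v = f a' + (l * c a') *\<^sub>R v}"

lemma finite_collision_scalars:
  assumes "finite S" "v \<noteq> 0"
  shows "finite (collision_scalars S f c v)"
proof (rule finite_subset)
  show "collision_scalars S f c v
      \<subseteq> (\<Union>(a, a')\<in>{(a, a') \<in> S \<times> S. c a \<noteq> c a'}. {l. l *\<^sub>R ((c a - c a') *\<^sub>R v) = f a' - f a})"
  proof
    fix l assume "l \<in> collision_scalars S f c v"
    then obtain a a' where a: "a \<in> S" "a' \<in> S" "c a \<noteq> c a'"
      and eq: "f a + (l * c a) *\<^sub>R v = f a' + (l * c a') *\<^sub>R v"
      unfolding collision_scalars_def by blast
    from eq have "l *\<^sub>R ((c a - c a') *\<^sub>R v) = f a' - f a"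
      by (simp add: algebra_simps)
    then show "l \<in> (\<Union>(a, a')\<in>{(a, a') \<in> S \<times> S. c a \<noteq> c a'}. {l. l *\<^sub>R ((c a - c a') *\<^sub>R v) = f a' - f a})"
      using a by blast
  qed
  show "finite (\<Union>(a, a')\<in>{(a, a') \<in> S \<times> S. c a \<noteq> c a'}. {l. l *\<^sub>R ((c a - c a') *\<^sub>R v) = f a' - f a})"
  proof (rule finite_UN_I)
    show "finite {(a, a') \<in> S \<times> S. c a \<noteq> c a'}"
      by (rule finite_subset[of _ "S \<times> S"]) (use assms(1) in auto)
    fix p assume "p \<in> {(a, a') \<in> S \<times> S. c a \<noteq> c a'}"
    then obtain a a' where p: "p = (a, a')" "c a \<noteq> c a'" by auto
    then have "(c a - c a') *\<^sub>R v \<noteq> 0"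
      using assms(2) by auto
    then show "finite (case p of (a, a') \<Rightarrow> {l. l *\<^sub>R ((c a - c a') *\<^sub>R v) = f a' - f a})"
      unfolding p prod.case by (rule finite_scaleR_solutions)
  qed
qed

lemma inj_on_shift_off_collisions:
  assumes "l \<notin> collision_scalars S f c v"
    and fibres: "\<And>a a'. a \<in> S \<Longrightarrow> a' \<in> S \<Longrightarrow> c a = c a' \<Longrightarrow> f a = f a' \<Longrightarrow> a = a'"
  shows "inj_on (\<lambda>a. f a + (l * c a) *\<^sub>R v) S"
proof (rule inj_onI)
  fix a a' assume a: "a \<in> S" "a' \<in> S" and eq: "f a + (l * c a) *\<^sub>R v = f a' + (l * c a') *\<^sub>R v"
  show "a = a'"
  proof (cases "c a = c a'")
    case True
    then show ?thesis using eq fibres[OF a] by simp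
  next
    case False
    then show ?thesis
      using assms(1) a eq unfolding collision_scalars_def by blast
  qed
qed

lemma exists_separating_shift:
  fixes f :: "'a \<Rightarrow> 'v::real_vector" and g :: "'a \<Rightarrow> 'q::countable"
  assumes S: "finite S" and "v \<noteq> 0" "\<epsilon> > 0"
    and fibres: "\<And>a a'. a \<in> S \<Longrightarrow> a' \<in> S \<Longrightarrow> g a = g a' \<Longrightarrow> f a = f a' \<Longrightarrow> a = a'"
  obtains h :: "'q \<Rightarrow> real"
  where "\<And>a. a \<in> S \<Longrightarrow> 0 \<le> h (g a) \<and> h (g a) < \<epsilon>"
    and "inj_on (\<lambda>a. f a + h (g a) *\<^sub>R v) S"
proof -
  define \<iota> where "\<iota> q = real (to_nat q)" for q :: 'q
  have \<iota>_inj: "\<iota> q = \<iota> q' \<Longrightarrow> q = q'" for q q'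
    unfolding \<iota>_def by (metis inj_to_nat injD of_nat_eq_iff)
  define M where "M = (\<Sum>a\<in>S. \<iota> (g a))"
  have M: "0 \<le> \<iota> (g a)" "\<iota> (g a) \<le> M" if "a \<in> S" for a
    unfolding M_def \<iota>_def using that S by (auto intro!: member_le_sum)
  have "M + 1 > 0"
    unfolding M_def \<iota>_def by (simp add: sum_nonneg add_nonneg_pos)
  then have "infinite ({0<..<\<epsilon> / (M + 1)} - collision_scalars S f (\<lambda>a. \<iota> (g a)) v)"
    using finite_collision_scalars[OF S \<open>v \<noteq> 0\<close>] \<open>\<epsilon> > 0\<close>
    by (intro Diff_infinite_finite infinite_Ioo) auto
  then obtain l where l: "0 < l" "l < \<epsilon> / (M + 1)" "l \<notin> collision_scalars S f (\<lambda>a. \<iota> (g a)) v"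
    by (metis Diff_iff finite.emptyI greaterThanLessThan_iff infinite_imp_nonempty ex_in_conv)
  show ?thesis
  proof (rule that[of "\<lambda>q. l * \<iota> q"])
    fix a assume "a \<in> S"
    have "l * \<iota> (g a) \<le> l * M"
      using M[OF \<open>a \<in> S\<close>] l(1) by (intro mult_left_mono) auto
    moreover have "l * M + l < \<epsilon>"
      using l(2) \<open>M + 1 > 0\<close> by (simp add: pos_less_divide_eq algebra_simps)
    ultimately show "0 \<le> l * \<iota> (g a) \<and> l * \<iota> (g a) < \<epsilon>"
      using M[OF \<open>a \<in> S\<close>] l(1) by (intro conjI) (simp, linarith)
  next
    show "inj_on (\<lambda>a. f a + (l * \<iota> (g a)) *\<^sub>R v) S"
      by (rule inj_on_shift_off_collisions[OF l(3)]) (use fibres \<iota>_inj in blast)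
  qed
qed

lemma floor_diff_le_ceiling:
  fixes x y e :: real
  assumes "e > 0" "\<bar>x - y\<bar> \<le> 1"
  shows "\<bar>\<lfloor>x / e\<rfloor> - \<lfloor>y / e\<rfloor>\<bar> \<le> \<lceil>1 / e\<rceil>"
proof -
  have "\<bar>x / e - y / e\<bar> \<le> 1 / e"
    using assms by (simp add: divide_right_mono flip: diff_divide_distrib)
  then have "\<bar>real_of_int (\<lfloor>x / e\<rfloor> - \<lfloor>y / e\<rfloor>)\<bar> < real_of_int \<lceil>1 / e\<rceil> + 1"
    using le_of_int_ceiling[of "1 / e"] by linarith
  then show ?thesis
    by linarith
qed

lemma floor_residue:
  fixes x e :: real
  assumes "e > 0"
  shows "0 \<le> x - e * \<lfloor>x / e\<rfloor> \<and> x - e * \<lfloor>x / e\<rfloor> < e"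
proof -
  have "e * \<lfloor>x / e\<rfloor> \<le> e * (x / e)" "e * (x / e) < e * (\<lfloor>x / e\<rfloor> + 1)"
    using assms by (simp_all del: times_divide_eq_right)
  then show ?thesis
    using assms by (simp add: algebra_simps)
qed

definition grid_cell :: "real \<Rightarrow> real^2 \<Rightarrow> int \<times> int" where
  "grid_cell e a = (\<lfloor>a$1 / e\<rfloor>, \<lfloor>a$2 / e\<rfloor>)"

definition cell_corner :: "real \<Rightarrow> int \<times> int \<Rightarrow> real^2" where
  "cell_corner e Q = pt (e * fst Q) (e * snd Q)"

definition grid_offsets :: "real \<Rightarrow> (int \<times> int) set" where
  "grid_offsets e = {-\<lceil>1/e\<rceil>..\<lceil>1/e\<rceil>} \<times> {-\<lceil>1/e\<rceil>..\<lceil>1/e\<rceil>}"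

lemma card_grid_offsets_pos: "e > 0 \<Longrightarrow> card (grid_offsets e) > 0"
proof -
  assume "e > 0"
  then have "0 < 1 / e"
    by simp
  then have "- 1 < 1 / e"
    by linarith
  then show ?thesis
    by (auto simp: grid_offsets_def card_gt_0_iff)
qed

lemma grid_cell_diff:
  assumes "e > 0" "dist a b \<le> 1"
  shows "grid_cell e b - grid_cell e a \<in> grid_offsets e"
proof -
  have "\<bar>b$i - a$i\<bar> \<le> 1" for i
    using component_le_norm_cart[of "b - a" i] assms(2) by (simp add: dist_norm norm_minus_commute)
  then have cells: "\<bar>\<lfloor>b$i / e\<rfloor> - \<lfloor>a$i / e\<rfloor>\<bar> \<le> \<lceil>1/e\<rceil>" for i
    using assms(1) floor_diff_le_ceiling by blast
  show ?thesis
    using cells[of 1] cells[of 2] by (simp add: grid_cell_def grid_offsets_def abs_le_iff)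
qed

lemma norm_sub_cell_corner:
  assumes "e > 0" "0 \<le> d" "d < e"
  shows "norm (a - cell_corner e (grid_cell e a) + d *\<^sub>R pt 1 0) < 3 * e"
proof -
  let ?v = "a - cell_corner e (grid_cell e a) + d *\<^sub>R pt 1 0"
  have "norm ?v \<le> \<bar>?v$1\<bar> + \<bar>?v$2\<bar>"
    unfolding norm_vec2 by (rule sqrt_sum_squares_le_sum_abs)
  also have "\<dots> < 3 * e"
    using floor_residue[OF assms(1), of "a$1"] floor_residue[OF assms(1), of "a$2"] assms
    by (simp add: grid_cell_def cell_corner_def)
  finally show ?thesis .
qed

(* As all
   pairs have the same cell offset w, the shift of the second end b depends on b
   alone, so the second ends still come from at most card S points. *)
lemma lex_unit_pairs_shift_by_cell:
  fixes cell :: "real^2 \<Rightarrow> 'q::ab_group_add" and \<tau> :: "'q \<Rightarrow> real^2"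
  assumes S: "finite S" and E1: "E1 \<subseteq> lex_unit_pairs S" "\<And>a b. (a, b) \<in> E1 \<Longrightarrow> cell b - cell a = w"
    and inj: "inj_on (\<lambda>a. a + \<tau> (cell a)) S"
  defines "E \<equiv> (\<lambda>(a, b). (a + \<tau> (cell a), b + \<tau> (cell a))) ` E1"
  shows "E \<subseteq> lex_unit_pairs UNIV" "card E = card E1"
    and "fst ` E \<subseteq> (\<lambda>a. a + \<tau> (cell a)) ` S" "card (snd ` E) \<le> card S"
proof -
  show "E \<subseteq> lex_unit_pairs UNIV"
    using E1(1) by (auto simp: E_def lex_unit_pairs_def lex_less_translate)
  have "inj_on (\<lambda>(a, b). (a + \<tau> (cell a), b + \<tau> (cell a))) E1"
  proof (rule inj_onI, clarify)
    fix a b a' b' assume ab: "(a, b) \<in> E1" "(a', b') \<in> E1"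
      and eq: "a + \<tau> (cell a) = a' + \<tau> (cell a')" "b + \<tau> (cell a) = b' + \<tau> (cell a')"
    have "a = a'"
      using inj eq(1) ab E1(1) by (auto simp: lex_unit_pairs_def dest: inj_onD)
    then show "a = a' \<and> b = b'"
      using eq(2) by simp
  qed
  then show "card E = card E1"
    by (simp add: E_def card_image)
  show "fst ` E \<subseteq> (\<lambda>a. a + \<tau> (cell a)) ` S"
    using E1(1) by (auto simp: E_def lex_unit_pairs_def)
  have "snd ` E \<subseteq> (\<lambda>b. b + \<tau> (cell b - w)) ` S"
  proof
    fix y assume "y \<in> snd ` E"
    then obtain a b where "(a, b) \<in> E1" "y = b + \<tau> (cell a)"
      by (auto simp: E_def)
    then show "y \<in> (\<lambda>b. b + \<tau> (cell b - w)) ` S"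
      using E1 by (force simp: lex_unit_pairs_def algebra_simps)
  qed
  then show "card (snd ` E) \<le> card S"
    using S by (meson card_image_le card_mono finite_imageI le_trans)
qed

lemma lex_unit_pairs_fold:
  assumes e: "e > 0" and S: "finite S"
  shows "\<exists>E \<subseteq> lex_unit_pairs UNIV. finite E \<and> fst ` E \<subseteq> ball 0 (3 * e) \<and>
    card (fst ` E) \<le> card S \<and> card (snd ` E) \<le> card S \<and>
    card (lex_unit_pairs S) \<le> card (grid_offsets e) * card E"
proof -
  define cell where "cell = grid_cell e"
  define off where "off = (\<lambda>(a, b). cell b - cell a)"
  have "off \<in> lex_unit_pairs S \<rightarrow> grid_offsets e"
    using grid_cell_diff[OF e] by (auto simp: off_def cell_def lex_unit_pairs_def)
  moreover have "grid_offsets e \<noteq> {}" "finite (grid_offsets e)"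
    using card_grid_offsets_pos[OF e] by (auto simp: card_gt_0_iff)
  ultimately obtain w where w:
    "card (lex_unit_pairs S) \<le> card (off -` {w} \<inter> lex_unit_pairs S) * card (grid_offsets e)"
    using pigeonhole_card[of off] finite_lex_unit_pairs[OF S] by blast
  define E1 where "E1 = off -` {w} \<inter> lex_unit_pairs S"
  have E1: "E1 \<subseteq> lex_unit_pairs S" "\<And>a b. (a, b) \<in> E1 \<Longrightarrow> cell b - cell a = w"
    by (auto simp: E1_def off_def)
  obtain h where h: "\<And>a. a \<in> S \<Longrightarrow> 0 \<le> h (cell a) \<and> h (cell a) < e"
    and inj: "inj_on (\<lambda>a. (a - cell_corner e (cell a)) + h (cell a) *\<^sub>R pt 1 0) S"
    using exists_separating_shift[OF S _ e, of "pt 1 0" cell "\<lambda>a. a - cell_corner e (cell a)"]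
    by (auto simp: vec_eq_iff forall_2)
  define \<tau> where "\<tau> Q = h Q *\<^sub>R pt 1 0 - cell_corner e Q" for Q
  define E where "E = (\<lambda>(a, b). (a + \<tau> (cell a), b + \<tau> (cell a))) ` E1"
  have "inj_on (\<lambda>a. a + \<tau> (cell a)) S"
    using inj by (simp add: \<tau>_def algebra_simps)
  note shifted = lex_unit_pairs_shift_by_cell[OF S E1 this, folded E_def]
  have "norm (a + \<tau> (cell a)) < 3 * e" if "a \<in> S" for a
    using norm_sub_cell_corner[OF e, of "h (cell a)" a] h[OF that]
    by (simp add: \<tau>_def cell_def algebra_simps)
  then have "fst ` E \<subseteq> ball 0 (3 * e)"
    using shifted(3) by auto
  moreover have "card (fst ` E) \<le> card S"
    using shifted(3) S by (meson card_image_le card_mono finite_imageI le_trans)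
  moreover have "finite E"
    using finite_lex_unit_pairs[OF S] by (simp add: E_def E1_def)
  moreover have "card (lex_unit_pairs S) \<le> card (grid_offsets e) * card E"
    using w shifted(2) by (simp add: E1_def mult.commute)
  ultimately show ?thesis
    using shifted(1,4) by blast
qed

lemma lex_unit_pairs_localize:
  assumes "\<epsilon> > 0"
  obtains K :: nat where "K > 0"
    and "\<And>S. finite S \<Longrightarrow> \<exists>E \<subseteq> lex_unit_pairs UNIV. finite E \<and> fst ` E \<subseteq> ball 0 \<epsilon> \<and>
      card (fst ` E) \<le> card S \<and> card (snd ` E) \<le> card S \<and> card (lex_unit_pairs S) \<le> K * card E"
proof (rule that[of "card (grid_offsets (\<epsilon> / 3))"])
  show "card (grid_offsets (\<epsilon> / 3)) > 0"
    using assms by (intro card_grid_offsets_pos) simp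
  show "\<exists>E \<subseteq> lex_unit_pairs UNIV. finite E \<and> fst ` E \<subseteq> ball 0 \<epsilon> \<and> card (fst ` E) \<le> card S \<and>
      card (snd ` E) \<le> card S \<and> card (lex_unit_pairs S) \<le> card (grid_offsets (\<epsilon> / 3)) * card E"
    if "finite S" for S
    using lex_unit_pairs_fold[of "\<epsilon> / 3" S] assms that by simp
qed

lemma many_paths_elbow_unit_pairs:
  assumes pos: "\<delta> 3 > 0" and "\<rho> > 0"
    and near: "\<And>y. dist y (elbow_offset (\<delta> 1) (\<delta> 2)) < \<rho> \<Longrightarrow>
      dist 0 (elbow 0 (\<delta> 1) y (\<delta> 2)) = \<delta> 1 \<and> dist (elbow 0 (\<delta> 1) y (\<delta> 2)) y = \<delta> 2 \<and>
      lex_less 0 (elbow 0 (\<delta> 1) y (\<delta> 2)) \<and> lex_less (elbow 0 (\<delta> 1) y (\<delta> 2)) y"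
    and E: "E \<subseteq> lex_unit_pairs UNIV" "finite E" "fst ` E \<subseteq> ball 0 (\<rho> / \<delta> 3)"
      "card (fst ` E) \<le> n" "card (snd ` E) \<le> n"
  shows "many_paths 3 \<delta> n (card E) True False"
proof (rule many_paths_of_lists)
  define \<psi> where "\<psi> a = \<delta> 3 *\<^sub>R a + elbow_offset (\<delta> 1) (\<delta> 2)" for a :: "real^2"
  define z where "z a = elbow 0 (\<delta> 1) (\<psi> a) (\<delta> 2)" for a
  define xs where "xs t = [0, z (fst t), \<psi> (fst t), \<psi> (snd t)]" for t :: "(real^2) \<times> (real^2)"
  show "inj_on xs E"
    using pos by (auto intro!: inj_onI simp: xs_def \<psi>_def prod_eq_iff)
  show "length (xs t) = 3 + 1 \<and> path_of_list (xs t) \<in> lex_paths 3 \<delta>" if tE: "t \<in> E" for t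
  proof -
    obtain a b where ab: "t = (a, b)"
      by (cases t)
    have "a \<in> fst ` E"
      using tE ab by force
    then have t: "dist a b = 1" "lex_less a b" "norm a < \<rho> / \<delta> 3"
      using ab tE E(1,3) by (auto simp: lex_unit_pairs_def)
    have "dist (\<psi> a) (elbow_offset (\<delta> 1) (\<delta> 2)) < \<rho>"
      using t(3) pos by (simp add: \<psi>_def dist_norm pos_less_divide_eq mult.commute)
    then have "dist 0 (z a) = \<delta> 1 \<and> dist (z a) (\<psi> a) = \<delta> 2 \<and> lex_less 0 (z a) \<and> lex_less (z a) (\<psi> a)"
      unfolding z_def by (rule near)
    moreover have "dist (\<psi> a) (\<psi> b) = \<delta> 3" "lex_less (\<psi> a) (\<psi> b)"
      using t pos by (simp_all add: \<psi>_def dist_norm lex_less_translate lex_less_scaleR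
          flip: scaleR_diff_right)
    ultimately have "path_of_list (xs t) \<in> lex_paths 3 \<delta>"
      unfolding xs_def ab fst_conv snd_conv by (intro path_of_list_lex_paths_3) auto
    then show ?thesis
      by (simp add: xs_def)
  qed
  show "card ((\<lambda>t. xs t ! j) ` E) \<le> n" if j: "j \<le> 3" for j
  proof -
    have "j = 0 \<or> j = 1 \<or> j = 2 \<or> j = 3"
      using j by linarith
    then show ?thesis
      using E(4,5) card_image_comp_le[OF E(2), of "\<lambda>_. 0 :: real^2" fst]
        card_image_comp_le[OF E(2), of z fst] card_image_comp_le[OF E(2), of \<psi> fst]
        card_image_comp_le[OF E(2), of \<psi> snd]
      by (auto simp: xs_def numeral_2_eq_2 numeral_3_eq_3)
  qed
qed (auto simp: E(2))

lemma many_paths_unit_pairs_pinned: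
  assumes \<delta>: "\<forall>i\<in>{1..3}. \<delta> i > 0"
  obtains K :: nat where "K > 0" and "\<And>n. \<exists>N. u2 n \<le> K * N \<and> many_paths 3 \<delta> n N True False"
proof -
  have pos: "\<delta> 1 > 0" "\<delta> 2 > 0" "\<delta> 3 > 0"
    using \<delta> by auto
  obtain \<rho> where "\<rho> > 0" and near0: "\<And>x y. dist x 0 < \<rho> \<Longrightarrow> dist y (0 + elbow_offset (\<delta> 1) (\<delta> 2)) < \<rho> \<Longrightarrow>
      dist x (elbow x (\<delta> 1) y (\<delta> 2)) = \<delta> 1 \<and> dist (elbow x (\<delta> 1) y (\<delta> 2)) y = \<delta> 2 \<and>
      lex_less x (elbow x (\<delta> 1) y (\<delta> 2)) \<and> lex_less (elbow x (\<delta> 1) y (\<delta> 2)) y"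
    using elbow_near[OF pos(1,2), of 0] by blast
  have near: "dist 0 (elbow 0 (\<delta> 1) y (\<delta> 2)) = \<delta> 1 \<and> dist (elbow 0 (\<delta> 1) y (\<delta> 2)) y = \<delta> 2 \<and>
      lex_less 0 (elbow 0 (\<delta> 1) y (\<delta> 2)) \<and> lex_less (elbow 0 (\<delta> 1) y (\<delta> 2)) y"
    if "dist y (elbow_offset (\<delta> 1) (\<delta> 2)) < \<rho>" for y
    using near0[of 0 y] that \<open>\<rho> > 0\<close> by simp
  obtain K where K: "K > 0" and localize: "\<And>S. finite S \<Longrightarrow> \<exists>E \<subseteq> lex_unit_pairs UNIV. finite E \<and>
      fst ` E \<subseteq> ball 0 (\<rho> / \<delta> 3) \<and> card (fst ` E) \<le> card S \<and> card (snd ` E) \<le> card S \<and>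
      card (lex_unit_pairs S) \<le> K * card E"
    using lex_unit_pairs_localize[of "\<rho> / \<delta> 3"] \<open>\<rho> > 0\<close> pos(3) by auto
  show thesis
  proof (rule that[OF K])
    fix n
    obtain S where S: "finite S" "card S = n" "unit_pairs S = u2 n"
      using u2_attained by blast
    then obtain E where E: "E \<subseteq> lex_unit_pairs UNIV" "finite E" "fst ` E \<subseteq> ball 0 (\<rho> / \<delta> 3)"
        "card (fst ` E) \<le> n" "card (snd ` E) \<le> n" "u2 n \<le> K * card E"
      using localize[of S] card_lex_unit_pairs[of S] by auto
    then show "\<exists>N. u2 n \<le> K * N \<and> many_paths 3 \<delta> n N True False"
      using many_paths_elbow_unit_pairs[OF pos(3) \<open>\<rho> > 0\<close> near E(1-5)] by blast
  qed
qed

lemma many_paths_chain: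
  assumes "\<forall>i\<in>{1..1 + 3 * j}. \<delta> i > 0"
  shows "many_paths (1 + 3 * j) \<delta> n (n ^ (j + 1)) False True"
  using assms
proof (induction j)
  case 0
  then show ?case using many_paths_fan_last[of \<delta> n] by simp
next
  case (Suc j)
  then have "many_paths (1 + 3 * j) \<delta> n (n ^ (j + 1)) False True"
    by simp
  moreover have "many_paths 3 (\<lambda>i. \<delta> (1 + 3 * j + i)) n n True True"
    using Suc.prems by (intro many_paths_bridge) auto
  ultimately have "many_paths (1 + 3 * j + 3) \<delta> n (n ^ (j + 1) * n) False True"
    by (rule many_paths_glue)
  then show ?case
    by (simp add: algebra_simps)
qed

lemma Ck_lower_bound_not_1_mod_3:
  assumes "k \<ge> 1" "k mod 3 \<noteq> 1" "\<forall>i\<in>{1..k}. \<delta> i > 0" "n \<ge> 1"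
  shows "n ^ ((k + 1) div 3 + 1) \<le> Ck k \<delta> n"
proof -
  define j where "j = (k - 1) div 3"
  have j: "k = 1 + 3 * j + 1 \<or> k = 1 + 3 * j + 2"
    using assms(1,2) unfolding j_def by presburger
  have chain: "many_paths (1 + 3 * j) \<delta> n (n ^ (j + 1)) False True"
    using assms(3) j by (intro many_paths_chain) auto
  have fan: "many_paths 1 (\<lambda>i. \<delta> (m + i)) n n True False" if "m < k" for m
    using assms(3) that by (intro many_paths_fan_first) auto
  from j have "many_paths k \<delta> n (n ^ (j + 2)) False False"
  proof
    assume k: "k = 1 + 3 * j + 1"
    have "many_paths 1 (\<lambda>i. \<delta> (1 + 3 * j + i)) n n True False"
      using fan[of "1 + 3 * j"] k by simp
    with chain have "many_paths (1 + 3 * j + 1) \<delta> n (n ^ (j + 1) * n) False False"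
      by (rule many_paths_glue)
    then show ?thesis
      using k by (simp add: algebra_simps)
  next
    assume k: "k = 1 + 3 * j + 2"
    have "many_paths 1 (\<lambda>i. \<delta> (1 + 3 * j + i)) n 1 True True"
      using assms(3,4) k by (intro many_paths_segment) auto
    with chain have "many_paths (1 + 3 * j + 1) \<delta> n (n ^ (j + 1) * 1) False True"
      by (rule many_paths_glue)
    moreover have "many_paths 1 (\<lambda>i. \<delta> (1 + 3 * j + 1 + i)) n n True False"
      using fan[of "1 + 3 * j + 1"] k by simp
    ultimately have "many_paths (1 + 3 * j + 1 + 1) \<delta> n (n ^ (j + 1) * 1 * n) False False"
      by (rule many_paths_glue)
    then show ?thesis
      using k by (simp add: algebra_simps numeral_2_eq_2)
  qed
  moreover have "(k + 1) div 3 + 1 = j + 2"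
    using j by auto
  ultimately show ?thesis
    using many_paths_le_Ck by simp
qed

lemma Ck_lower_bound_1_mod_3:
  assumes "k mod 3 = 1" "\<forall>i\<in>{1..k}. \<delta> i > 0"
  obtains K :: nat where "K > 0" and "\<And>n. n ^ ((k - 1) div 3) * u2 n \<le> K * Ck k \<delta> n"
proof (cases "k = 1")
  case True
  have "u2 n \<le> Ck k \<delta> n" for n
    using many_paths_unit_pairs[of \<delta> n] assms(2) True many_paths_le_Ck by simp
  then show ?thesis
    using that[of 1] True by simp
next
  case False
  define j where "j = (k - 4) div 3"
  have k: "k = 1 + 3 * j + 3"
    using assms(1) False unfolding j_def by presburger
  obtain K where K: "K > 0" and unit: "\<And>n. \<exists>N. u2 n \<le> K * N \<and> many_paths 3 (\<lambda>i. \<delta> (1 + 3 * j + i)) n N True False"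
    using many_paths_unit_pairs_pinned[of "\<lambda>i. \<delta> (1 + 3 * j + i)"] assms(2) k by auto
  have "n ^ (j + 1) * u2 n \<le> K * Ck k \<delta> n" for n
  proof -
    obtain N where N: "u2 n \<le> K * N" "many_paths 3 (\<lambda>i. \<delta> (1 + 3 * j + i)) n N True False"
      using unit by blast
    have "many_paths (1 + 3 * j) \<delta> n (n ^ (j + 1)) False True"
      using assms(2) k by (intro many_paths_chain) auto
    then have "many_paths k \<delta> n (n ^ (j + 1) * N) False False"
      unfolding k using N(2) by (rule many_paths_glue)
    then have "n ^ (j + 1) * N \<le> Ck k \<delta> n"
      by (rule many_paths_le_Ck)
    have "n ^ (j + 1) * u2 n \<le> n ^ (j + 1) * (K * N)"
      using N(1) by simp
    also have "\<dots> \<le> K * Ck k \<delta> n"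
      using \<open>n ^ (j + 1) * N \<le> Ck k \<delta> n\<close> by (simp add: mult.left_commute)
    finally show ?thesis .
  qed
  moreover have "(k - 1) div 3 = j + 1"
    using k by simp
  ultimately show ?thesis
    using that[OF K] by simp
qed

lemma bigomega_natI:
  fixes f g :: "nat \<Rightarrow> real"
  assumes "c > 0" "\<And>n. n \<ge> 1 \<Longrightarrow> c * g n \<le> f n" "\<And>n. 0 \<le> g n"
  shows "f \<in> \<Omega>(g)"
proof (rule landau_omega.bigI[OF assms(1)])
  show "\<forall>\<^sub>F n in at_top. c * norm (g n) \<le> norm (f n)"
    using eventually_ge_at_top[of 1]
  proof eventually_elim
    case (elim n)
    then have "c * g n \<le> f n" "0 \<le> c * g n"
      using assms by simp_all
    then show ?case
      using assms(3)[of n] by simp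
  qed
qed

theorem proposition3p1:
  fixes k :: nat and \<delta> :: "nat \<Rightarrow> real"
  assumes "k \<ge> 1"
    and "\<forall>i\<in>{1..k}. \<delta> i > 0"
  shows "(k mod 3 = 0 \<or> k mod 3 = 2 \<longrightarrow>
           (\<lambda>n. real (Ck k \<delta> n)) \<in> \<Omega>(\<lambda>n. real n ^ ((k + 1) div 3 + 1)))
       \<and> (k mod 3 = 1 \<longrightarrow>
           (\<lambda>n. real (Ck k \<delta> n)) \<in> \<Omega>(\<lambda>n. real n ^ ((k - 1) div 3) * real (u2 n)))"
proof (intro conjI impI)
  assume "k mod 3 = 0 \<or> k mod 3 = 2"
  then have "1 * real n ^ ((k + 1) div 3 + 1) \<le> real (Ck k \<delta> n)" if "n \<ge> 1" for n
    using Ck_lower_bound_not_1_mod_3[OF assms(1) _ assms(2) that]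
    unfolding mult_1 of_nat_power[symmetric] of_nat_le_iff by auto
  then show "(\<lambda>n. real (Ck k \<delta> n)) \<in> \<Omega>(\<lambda>n. real n ^ ((k + 1) div 3 + 1))"
    by (intro bigomega_natI[of 1]) simp_all
next
  assume "k mod 3 = 1"
  then obtain K where K: "K > 0" and bound: "\<And>n. n ^ ((k - 1) div 3) * u2 n \<le> K * Ck k \<delta> n"
    using Ck_lower_bound_1_mod_3 assms(2) by blast
  have "1 / K * (real n ^ ((k - 1) div 3) * real (u2 n)) \<le> real (Ck k \<delta> n)" for n
    using bound[of n] K by (simp add: field_simps flip: of_nat_power of_nat_mult)
  then show "(\<lambda>n. real (Ck k \<delta> n)) \<in> \<Omega>(\<lambda>n. real n ^ ((k - 1) div 3) * real (u2 n))"
    using K by (intro bigomega_natI[of "1 / K"]) simp_all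
qed

end
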